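(* The Funk–Finsler metric $\mathcal{F}$ on the Klein unit disc $\mathbb{D}_K(1)$ is a Douglas metric which is not a Berwald metric.
   Context: $r=\frac{e^2-1}{e^2+1}$, $\mathbb{D}_K(1)=\{x\in\mathbb{R}^2:|x|<r\}$, and $\mathcal{F}(x,\xi)=\frac{\sqrt{(r^2-|x|^2)|\xi|^2+\langle x,\xi\rangle^2}}{r^2-|x|^2}+\frac{(1-r^2)\langle x,\xi\rangle}{(r^2-|x|^2)(1-|x|^2)}$. A Finsler metric is Berwald if its spray coefficients $G^i(x,\xi)$ are quadratic in $\xi$ at each $x$; it is Douglas if $G^i\xi^j-G^j\xi^i$ is a homogeneous polynomial of degree $3$ in $\xi$ at each $x$. Spray coefficients: $G^i=\frac14g^{i\ell}\{[F^2]_{x^k\xi^\ell}\xi^k-[F^2]_{x^\ell}\}$. *)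

theory Defs
  imports "HOL-Analysis.Analysis"
begin

definition rK :: real where
  "rK = (exp 2 - 1) / (exp 2 + 1)"

definition klein_disc :: "(real^2) set" where
  "klein_disc = {x. norm x < rK}"

definition funk_finsler :: "real^2 \<Rightarrow> real^2 \<Rightarrow> real" where
  "funk_finsler x xi =
     sqrt ((rK^2 - (norm x)^2) * (norm xi)^2 + (inner x xi)^2) / (rK^2 - (norm x)^2)
     + (1 - rK^2) * inner x xi / ((rK^2 - (norm x)^2) * (1 - (norm x)^2))"

definition dx :: "2 \<Rightarrow> (real^2 \<Rightarrow> real^2 \<Rightarrow> real) \<Rightarrow> real^2 \<Rightarrow> real^2 \<Rightarrow> real" where
  "dx k f x xi = deriv (\<lambda>t. f (x + t *\<^sub>R axis k 1) xi) 0"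

definition dxi :: "2 \<Rightarrow> (real^2 \<Rightarrow> real^2 \<Rightarrow> real) \<Rightarrow> real^2 \<Rightarrow> real^2 \<Rightarrow> real" where
  "dxi k f x xi = deriv (\<lambda>t. f x (xi + t *\<^sub>R axis k 1)) 0"

definition fund_tensor :: "(real^2 \<Rightarrow> real^2 \<Rightarrow> real) \<Rightarrow> real^2 \<Rightarrow> real^2 \<Rightarrow> real^2^2" where
  "fund_tensor F x xi =
     (\<chi> i j. (1/2) * dxi i (dxi j (\<lambda>x' xi'. (F x' xi')^2)) x xi)"

definition spray_coeff :: "(real^2 \<Rightarrow> real^2 \<Rightarrow> real) \<Rightarrow> 2 \<Rightarrow> real^2 \<Rightarrow> real^2 \<Rightarrow> real" where
  "spray_coeff F i x xi =
     (let E = (\<lambda>x' xi'. (F x' xi')^2);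
          ginv = matrix_inv (fund_tensor F x xi)
      in (1/4) * (\<Sum>l\<in>UNIV. ginv $ i $ l *
             ((\<Sum>k\<in>UNIV. dx k (dxi l E) x xi * xi $ k) - dx l E x xi)))"

text \<open>Berwald on U: at each x in U, each G^i is a quadratic form in xi
  (on the slit tangent space xi \<noteq> 0, where F is defined).\<close>

definition is_berwald_on :: "(real^2) set \<Rightarrow> (real^2 \<Rightarrow> real^2 \<Rightarrow> real) \<Rightarrow> bool" where
  "is_berwald_on U F \<longleftrightarrow>
     (\<forall>x\<in>U. \<forall>i. \<exists>c :: real^2^2. \<forall>xi. xi \<noteq> 0 \<longrightarrow>
        spray_coeff F i x xi = (\<Sum>j\<in>UNIV. \<Sum>k\<in>UNIV. c $ j $ k * xi $ j * xi $ k))"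

definition is_douglas_on :: "(real^2) set \<Rightarrow> (real^2 \<Rightarrow> real^2 \<Rightarrow> real) \<Rightarrow> bool" where
  "is_douglas_on U F \<longleftrightarrow>
     (\<forall>x\<in>U. \<forall>i j. \<exists>c :: real^2^2^2. \<forall>xi. xi \<noteq> 0 \<longrightarrow>
        spray_coeff F i x xi * xi $ j - spray_coeff F j x xi * xi $ i
        = (\<Sum>a\<in>UNIV. \<Sum>b\<in>UNIV. \<Sum>d\<in>UNIV. c $ a $ b $ d * xi $ a * xi $ b * xi $ d))"

end

theory Submission
  imports Defs
begin

text \<open>The Funk metric is projectively flat: Euler's relation for F and Hamel's condition
  F_{x^k xi^l} xi^k = F_{x^l} force its spray to be radial, G^i = P xi^i with
  P = F_{x^k} xi^k / (2F). A radial spray satisfies the Douglas condition trivially.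
  At the origin P(0, xi) = (1 - rK^2) |xi| / (2 rK) is even in xi, so G^i is odd in xi
  and cannot be a quadratic form.\<close>

section \<open>Sprays of projectively flat metrics\<close>

lemma eventually_line_in_open:
  fixes a h :: "'a::real_normed_vector"
  assumes "open V" "a \<in> V"
  shows "eventually (\<lambda>t. a + t *\<^sub>R h \<in> V) (nhds (0::real))"
proof -
  have "((\<lambda>t::real. a + t *\<^sub>R h) \<longlongrightarrow> a + 0 *\<^sub>R h) (nhds 0)"
    by (intro tendsto_intros filterlim_ident)
  then show ?thesis
    using assms by (intro topological_tendstoD) auto
qed

lemma dxi_square:
  assumes "((\<lambda>t. F x (xi + t *\<^sub>R axis j 1)) has_real_derivative D) (at 0)"
  shows "dxi j (\<lambda>x' xi'. (F x' xi')^2) x xi = 2 * F x xi * D"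
  unfolding dxi_def by (rule DERIV_imp_deriv) (auto intro!: derivative_eq_intros assms)

lemma dx_square:
  assumes "((\<lambda>t. F (x + t *\<^sub>R axis k 1) xi) has_real_derivative D) (at 0)"
  shows "dx k (\<lambda>x' xi'. (F x' xi')^2) x xi = 2 * F x xi * D"
  unfolding dx_def by (rule DERIV_imp_deriv) (auto intro!: derivative_eq_intros assms)

lemma fund_tensor_eq_hessian:
  assumes "open V" "xi \<in> V"
    and grad: "\<And>xi' h. xi' \<in> V \<Longrightarrow> ((\<lambda>t. F x (xi' + t *\<^sub>R h)) has_real_derivative u xi' \<bullet> h) (at 0)"
    and hess: "\<And>h k. ((\<lambda>t. u (xi + t *\<^sub>R h) \<bullet> k) has_real_derivative H h \<bullet> k) (at 0)"
  shows "fund_tensor F x xi $ i $ j = u xi $ i * u xi $ j + F x xi * H (axis i 1) $ j"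
proof -
  let ?E = "\<lambda>x' xi'. (F x' xi')^2" and ?e = "\<lambda>k::2. axis k (1::real)"
  have "eventually (\<lambda>t. dxi j ?E x (xi + t *\<^sub>R ?e i) = 2 * F x (xi + t *\<^sub>R ?e i) * (u (xi + t *\<^sub>R ?e i) \<bullet> ?e j)) (nhds 0)"
    using eventually_line_in_open[OF assms(1,2)] by eventually_elim (intro dxi_square grad)
  moreover have "((\<lambda>t. 2 * F x (xi + t *\<^sub>R ?e i) * (u (xi + t *\<^sub>R ?e i) \<bullet> ?e j))
      has_real_derivative 2 * ((u xi \<bullet> ?e i) * (u xi \<bullet> ?e j) + F x xi * (H (?e i) \<bullet> ?e j))) (at 0)"
    by (auto intro!: derivative_eq_intros grad[OF assms(2)] hess simp: algebra_simps)
  ultimately have "((\<lambda>t. dxi j ?E x (xi + t *\<^sub>R ?e i))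
      has_real_derivative 2 * ((u xi \<bullet> ?e i) * (u xi \<bullet> ?e j) + F x xi * (H (?e i) \<bullet> ?e j))) (at 0)"
    by (rule DERIV_cong_ev[OF refl _ refl, THEN iffD2])
  then have "dxi i (dxi j ?E) x xi = 2 * ((u xi \<bullet> ?e i) * (u xi \<bullet> ?e j) + F x xi * (H (?e i) \<bullet> ?e j))"
    unfolding dxi_def[of i "dxi j ?E"] by (rule DERIV_imp_deriv)
  then show ?thesis
    unfolding fund_tensor_def by (simp add: inner_axis)
qed

lemma dx_dxi_eq_mixed_hessian:
  assumes "open W" "x \<in> W"
    and grad_xi: "\<And>x' h. x' \<in> W \<Longrightarrow> ((\<lambda>t. F x' (xi + t *\<^sub>R h)) has_real_derivative u x' \<bullet> h) (at 0)"
    and grad_x: "\<And>k. ((\<lambda>t. F (x + t *\<^sub>R k) xi) has_real_derivative v \<bullet> k) (at 0)"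
    and mixed: "\<And>h k. ((\<lambda>t. u (x + t *\<^sub>R k) \<bullet> h) has_real_derivative M h \<bullet> k) (at 0)"
  shows "dx k (dxi l (\<lambda>x' xi'. (F x' xi')^2)) x xi = 2 * (v $ k * u x $ l + F x xi * M (axis l 1) $ k)"
proof -
  let ?E = "\<lambda>x' xi'. (F x' xi')^2" and ?e = "\<lambda>k::2. axis k (1::real)"
  have "eventually (\<lambda>t. dxi l ?E (x + t *\<^sub>R ?e k) xi = 2 * F (x + t *\<^sub>R ?e k) xi * (u (x + t *\<^sub>R ?e k) \<bullet> ?e l)) (nhds 0)"
    using eventually_line_in_open[OF assms(1,2)] by eventually_elim (intro dxi_square grad_xi)
  moreover have "((\<lambda>t. 2 * F (x + t *\<^sub>R ?e k) xi * (u (x + t *\<^sub>R ?e k) \<bullet> ?e l))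
      has_real_derivative 2 * ((v \<bullet> ?e k) * (u x \<bullet> ?e l) + F x xi * (M (?e l) \<bullet> ?e k))) (at 0)"
    by (auto intro!: derivative_eq_intros grad_x mixed simp: algebra_simps)
  ultimately have "((\<lambda>t. dxi l ?E (x + t *\<^sub>R ?e k) xi)
      has_real_derivative 2 * ((v \<bullet> ?e k) * (u x \<bullet> ?e l) + F x xi * (M (?e l) \<bullet> ?e k))) (at 0)"
    by (rule DERIV_cong_ev[OF refl _ refl, THEN iffD2])
  then have "dx k (dxi l ?E) x xi = 2 * ((v \<bullet> ?e k) * (u x \<bullet> ?e l) + F x xi * (M (?e l) \<bullet> ?e k))"
    unfolding dx_def[of k "dxi l ?E"] by (rule DERIV_imp_deriv)
  then show ?thesis
    by (simp add: inner_axis)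
qed

lemma matrix_inv_left:
  assumes "invertible A"
  shows "matrix_inv A ** A = mat 1"
proof -
  have "\<exists>A'. A ** A' = mat 1 \<and> A' ** A = mat 1"
    using assms unfolding invertible_def by blast
  from someI_ex[OF this] show ?thesis
    unfolding matrix_inv_def by blast
qed

lemma inner_real2: "(a::real^2) \<bullet> b = a $ 1 * b $ 1 + a $ 2 * b $ 2"
  by (simp add: inner_vec_def sum_2)

text \<open>Euler's relation u \<bullet> xi = F and H xi = 0 give g xi = F u, and Hamel's condition
  turns the bracket of the spray formula into (2 (v \<bullet> xi) / F) g xi, so applying
  g\<inverse> leaves a multiple of xi.\<close>
lemma spray_coeff_eq_projective_factor:
  fixes F :: "real^2 \<Rightarrow> real^2 \<Rightarrow> real"
  defines "E \<equiv> \<lambda>x' xi'. (F x' xi')^2"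
  assumes fund: "\<And>i j. fund_tensor F x xi $ i $ j = u $ i * u $ j + F x xi * H (axis i 1) $ j"
    and mixed: "\<And>k l. dx k (dxi l E) x xi = 2 * (v $ k * u $ l + F x xi * M (axis l 1) $ k)"
    and first: "\<And>l. dx l E x xi = 2 * F x xi * v $ l"
    and euler: "u \<bullet> xi = F x xi"
    and hess_radial: "\<And>h. H h \<bullet> xi = 0"
    and hamel: "\<And>h. M h \<bullet> xi = v \<bullet> h"
    and "F x xi \<noteq> 0" "invertible (fund_tensor F x xi)"
  shows "spray_coeff F i x xi = (v \<bullet> xi) / (2 * F x xi) * xi $ i"
proof -
  define g where "g = fund_tensor F x xi"
  define P where "P = (v \<bullet> xi) / F x xi"
  have g_xi: "(g *v xi) $ l = F x xi * u $ l" for l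
  proof -
    have "(g *v xi) $ l = u $ l * (u \<bullet> xi) + F x xi * (H (axis l 1) \<bullet> xi)"
      by (simp add: g_def fund matrix_vector_mult_def sum_2 inner_real2 algebra_simps)
    then show ?thesis by (simp add: euler hess_radial)
  qed
  have bracket: "(\<Sum>k\<in>UNIV. dx k (dxi l E) x xi * xi $ k) - dx l E x xi = 2 * P * (g *v xi) $ l" for l
  proof -
    have "(\<Sum>k\<in>UNIV. dx k (dxi l E) x xi * xi $ k) - dx l E x xi
        = 2 * (u $ l * (v \<bullet> xi) + F x xi * (M (axis l 1) \<bullet> xi - v $ l))"
      by (simp add: mixed first sum_2 inner_real2 algebra_simps)
    then show ?thesis
      using \<open>F x xi \<noteq> 0\<close> by (simp add: hamel inner_axis g_xi P_def)
  qed
  have "matrix_inv g ** g = mat 1"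
    using \<open>invertible (fund_tensor F x xi)\<close> by (simp add: g_def matrix_inv_left)
  then have "(matrix_inv g *v (g *v xi)) $ i = xi $ i"
    by (simp add: matrix_vector_mul_assoc)
  then have inv: "(\<Sum>l\<in>UNIV. matrix_inv g $ i $ l * (g *v xi) $ l) = xi $ i"
    by (simp add: matrix_vector_mult_def)
  have "spray_coeff F i x xi = 1/4 * (\<Sum>l\<in>UNIV. matrix_inv g $ i $ l * (2 * P * (g *v xi) $ l))"
    unfolding spray_coeff_def Let_def g_def[symmetric] E_def[symmetric] bracket ..
  also have "\<dots> = P / 2 * (\<Sum>l\<in>UNIV. matrix_inv g $ i $ l * (g *v xi) $ l)"
    by (simp add: sum_distrib_left algebra_simps)
  finally show ?thesis
    by (simp add: inv P_def)
qed

lemma is_douglas_on_if_projective: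
  assumes "\<And>x xi i. x \<in> U \<Longrightarrow> xi \<noteq> 0 \<Longrightarrow> spray_coeff F i x xi = P x xi * xi $ i"
  shows "is_douglas_on U F"
  unfolding is_douglas_on_def
proof (intro ballI allI)
  fix x i j assume "x \<in> U"
  then show "\<exists>c :: real^2^2^2. \<forall>xi. xi \<noteq> 0 \<longrightarrow>
      spray_coeff F i x xi * xi $ j - spray_coeff F j x xi * xi $ i
      = (\<Sum>a\<in>UNIV. \<Sum>b\<in>UNIV. \<Sum>d\<in>UNIV. c $ a $ b $ d * xi $ a * xi $ b * xi $ d)"
    by (intro exI[of _ 0]) (simp add: assms)
qed

lemma is_berwald_on_spray_coeff_even:
  assumes "is_berwald_on U F" "x \<in> U" "xi \<noteq> 0"
  shows "spray_coeff F i x (- xi) = spray_coeff F i x xi"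
proof -
  obtain c :: "real^2^2" where c: "\<And>xi. xi \<noteq> 0 \<Longrightarrow>
      spray_coeff F i x xi = (\<Sum>j\<in>UNIV. \<Sum>k\<in>UNIV. c $ j $ k * xi $ j * xi $ k)"
    using assms(1,2) unfolding is_berwald_on_def by blast
  show ?thesis
    using assms(3) by (simp add: c)
qed

section \<open>The Funk metric of the Klein disc\<close>

definition funk_c :: real where
  "funk_c = 1 - rK^2"

definition funk_s :: "real^2 \<Rightarrow> real" where
  "funk_s x = rK^2 - x \<bullet> x"

definition funk_q :: "real^2 \<Rightarrow> real" where
  "funk_q x = 1 - x \<bullet> x"

definition funk_root :: "real^2 \<Rightarrow> real^2 \<Rightarrow> real" where
  "funk_root x xi = sqrt (funk_s x * (xi \<bullet> xi) + (x \<bullet> xi)^2)"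

lemma funk_finsler_eq:
  "funk_finsler x xi = funk_root x xi / funk_s x + funk_c * (x \<bullet> xi) / (funk_s x * funk_q x)"
  by (simp add: funk_finsler_def funk_root_def funk_s_def funk_q_def funk_c_def power2_norm_eq_inner)

lemma rK_pos: "0 < rK"
  unfolding rK_def by (simp add: add_pos_pos)

lemma rK_less_1: "rK < 1"
  unfolding rK_def by (simp add: add_pos_pos)

lemma funk_c_pos: "0 < funk_c"
  using rK_pos rK_less_1 by (simp add: funk_c_def abs_square_less_1)

lemma klein_disc_eq_ball: "klein_disc = ball 0 rK"
  by (auto simp: klein_disc_def)

lemma mem_klein_disc_iff: "x \<in> klein_disc \<longleftrightarrow> x \<bullet> x < rK^2"
proof -
  have "norm x < rK \<longleftrightarrow> norm x ^ 2 < rK ^ 2"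
    using rK_pos by (auto intro: power_strict_mono dest: power_less_imp_less_base)
  then show ?thesis
    by (simp add: klein_disc_def power2_norm_eq_inner)
qed

lemma funk_domain:
  assumes "x \<in> klein_disc" "xi \<noteq> 0"
  shows "0 < funk_s x" "0 < funk_q x" "0 < funk_s x * (xi \<bullet> xi) + (x \<bullet> xi)^2" "0 < funk_root x xi"
proof -
  have x: "x \<bullet> x < rK^2"
    using assms(1) by (simp add: mem_klein_disc_iff)
  show s: "0 < funk_s x"
    using x by (simp add: funk_s_def)
  show "0 < funk_q x"
    using x rK_less_1 rK_pos unfolding funk_q_def by (smt (verit) power_le_one)
  show radicand: "0 < funk_s x * (xi \<bullet> xi) + (x \<bullet> xi)^2"
    using s assms(2) by (simp add: add_pos_nonneg)
  then show "0 < funk_root x xi"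
    by (simp add: funk_root_def)
qed

lemma funk_radicand_eq:
  assumes "x \<in> klein_disc" "xi \<noteq> 0"
  shows "funk_s x * (xi \<bullet> xi) + (x \<bullet> xi)^2 = funk_root x xi ^ 2"
  using funk_domain(3)[OF assms] by (simp add: funk_root_def)

definition funk_grad_xi :: "real^2 \<Rightarrow> real^2 \<Rightarrow> real^2" where
  "funk_grad_xi x xi = (1 / funk_root x xi) *\<^sub>R xi
     + ((x \<bullet> xi) / (funk_s x * funk_root x xi) + funk_c / (funk_s x * funk_q x)) *\<^sub>R x"

definition funk_grad_x :: "real^2 \<Rightarrow> real^2 \<Rightarrow> real^2" where
  "funk_grad_x x xi = ((x \<bullet> xi) / (funk_s x * funk_root x xi) + funk_c / (funk_s x * funk_q x)) *\<^sub>R xi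
     + (2 * funk_root x xi / (funk_s x)^2 - (xi \<bullet> xi) / (funk_s x * funk_root x xi)
        + 2 * funk_c * (x \<bullet> xi) * (funk_s x + funk_q x) / (funk_s x * funk_q x)^2) *\<^sub>R x"

definition funk_hess_xi :: "real^2 \<Rightarrow> real^2 \<Rightarrow> real^2 \<Rightarrow> real^2" where
  "funk_hess_xi x xi h =
    (let A = funk_s x * (xi \<bullet> h) + (x \<bullet> xi) * (x \<bullet> h); S = funk_root x xi in
     (1 / S) *\<^sub>R h - (A / S^3) *\<^sub>R xi + ((x \<bullet> h) / (funk_s x * S) - (x \<bullet> xi) * A / (funk_s x * S^3)) *\<^sub>R x)"

text \<open>cs, cq, cL, cp are the partial derivatives of funk_grad_xi x xi \<bullet> h with respect to
  s = funk_s x, q = funk_q x, L = x \<bullet> xi and p = x \<bullet> h, whose x-gradients are -2x, -2x, xi, h.\<close>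
definition funk_hess_mixed :: "real^2 \<Rightarrow> real^2 \<Rightarrow> real^2 \<Rightarrow> real^2" where
  "funk_hess_mixed x xi h =
    (let m = xi \<bullet> h; p = x \<bullet> h; L = x \<bullet> xi; N = xi \<bullet> xi; S = funk_root x xi;
       s = funk_s x; q = funk_q x; c = funk_c;
       cs = - m * N / (2 * S^3) - L * p / (s^2 * S) - L * p * N / (2 * s * S^3) - c * p / (s^2 * q);
       cq = - c * p / (s * q^2);
       cL = - m * L / S^3 + p / (s * S) - L^2 * p / (s * S^3);
       cp = L / (s * S) + c / (s * q)
     in (-2 * (cs + cq)) *\<^sub>R x + cL *\<^sub>R xi + cp *\<^sub>R h)"

lemma funk_s_line: "funk_s (x + t *\<^sub>R k) = funk_s x - (2 * t * (x \<bullet> k) + t^2 * (k \<bullet> k))"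
  by (simp add: funk_s_def inner_add_left inner_add_right inner_commute algebra_simps power2_eq_square)

lemma funk_q_line: "funk_q (x + t *\<^sub>R k) = funk_q x - (2 * t * (x \<bullet> k) + t^2 * (k \<bullet> k))"
  by (simp add: funk_q_def inner_add_left inner_add_right inner_commute algebra_simps power2_eq_square)

lemma has_derivative_funk_xi:
  assumes "x \<in> klein_disc" "xi \<noteq> 0"
  shows "((\<lambda>t. funk_finsler x (xi + t *\<^sub>R h)) has_real_derivative funk_grad_xi x xi \<bullet> h) (at 0)"
proof -
  note d = funk_domain[OF assms]
  have eq: "(\<lambda>t. funk_finsler x (xi + t *\<^sub>R h)) = (\<lambda>t.
      sqrt (funk_s x * (xi \<bullet> xi + 2 * t * (xi \<bullet> h) + t^2 * (h \<bullet> h)) + (x \<bullet> xi + t * (x \<bullet> h))^2) / funk_s x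
      + funk_c * (x \<bullet> xi + t * (x \<bullet> h)) / (funk_s x * funk_q x))"
    by (auto simp: fun_eq_iff funk_finsler_eq funk_root_def inner_add_right inner_commute algebra_simps
        power2_eq_square)
  show ?thesis unfolding eq
    using d apply (auto intro!: derivative_eq_intros)
    apply (simp add: funk_grad_xi_def funk_root_def inner_add_left inner_scaleR_left)
    apply (simp add: field_simps inner_commute)
    done
qed

lemma has_derivative_funk_x:
  assumes "x \<in> klein_disc" "xi \<noteq> 0"
  shows "((\<lambda>t. funk_finsler (x + t *\<^sub>R k) xi) has_real_derivative funk_grad_x x xi \<bullet> k) (at 0)"
proof -
  note d = funk_domain[OF assms]
  have eq: "(\<lambda>t. funk_finsler (x + t *\<^sub>R k) xi) = (\<lambda>t.
      sqrt ((funk_s x - (2 * t * (x \<bullet> k) + t^2 * (k \<bullet> k))) * (xi \<bullet> xi) + (x \<bullet> xi + t * (k \<bullet> xi))^2)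
        / (funk_s x - (2 * t * (x \<bullet> k) + t^2 * (k \<bullet> k)))
      + funk_c * (x \<bullet> xi + t * (k \<bullet> xi))
        / ((funk_s x - (2 * t * (x \<bullet> k) + t^2 * (k \<bullet> k))) * (funk_q x - (2 * t * (x \<bullet> k) + t^2 * (k \<bullet> k)))))"
    by (simp add: fun_eq_iff funk_finsler_eq funk_root_def funk_s_line funk_q_line inner_add_left)
  show ?thesis unfolding eq
    using d apply (auto intro!: derivative_eq_intros)
    apply (simp only: funk_root_def[symmetric] funk_radicand_eq[OF assms])
    apply (simp add: funk_grad_x_def inner_add_left inner_scaleR_left)
    using d apply (simp add: field_simps inner_commute power2_eq_square power3_eq_cube)
    done
qed

lemma has_derivative_funk_grad_xi_xi:
  assumes "x \<in> klein_disc" "xi \<noteq> 0"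
  shows "((\<lambda>t. funk_grad_xi x (xi + t *\<^sub>R h) \<bullet> k) has_real_derivative funk_hess_xi x xi h \<bullet> k) (at 0)"
proof -
  note d = funk_domain[OF assms]
  have eq: "(\<lambda>t. funk_grad_xi x (xi + t *\<^sub>R h) \<bullet> k) = (\<lambda>t.
      (xi \<bullet> k + t * (h \<bullet> k)) / sqrt (funk_s x * (xi \<bullet> xi + 2 * t * (xi \<bullet> h) + t^2 * (h \<bullet> h)) + (x \<bullet> xi + t * (x \<bullet> h))^2)
      + ((x \<bullet> xi + t * (x \<bullet> h))
          / (funk_s x * sqrt (funk_s x * (xi \<bullet> xi + 2 * t * (xi \<bullet> h) + t^2 * (h \<bullet> h)) + (x \<bullet> xi + t * (x \<bullet> h))^2))
        + funk_c / (funk_s x * funk_q x)) * (x \<bullet> k))"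
    by (auto simp: fun_eq_iff funk_grad_xi_def funk_root_def inner_add_left inner_add_right inner_scaleR_left
        inner_scaleR_right inner_commute algebra_simps power2_eq_square add_divide_distrib)
  show ?thesis unfolding eq
    using d apply (auto intro!: derivative_eq_intros)
    apply (simp only: funk_root_def[symmetric] funk_radicand_eq[OF assms])
    apply (simp add: funk_hess_xi_def Let_def inner_add_left inner_diff_left inner_scaleR_left)
    using d apply (simp add: field_simps inner_commute power2_eq_square power3_eq_cube)
    done
qed

lemma has_derivative_funk_grad_xi_x:
  assumes "x \<in> klein_disc" "xi \<noteq> 0"
  shows "((\<lambda>t. funk_grad_xi (x + t *\<^sub>R k) xi \<bullet> h) has_real_derivative funk_hess_mixed x xi h \<bullet> k) (at 0)"
proof -
  note d = funk_domain[OF assms]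
  have eq: "(\<lambda>t. funk_grad_xi (x + t *\<^sub>R k) xi \<bullet> h) = (\<lambda>t.
      (1 / sqrt ((funk_s x - (2 * t * (x \<bullet> k) + t^2 * (k \<bullet> k))) * (xi \<bullet> xi) + (x \<bullet> xi + t * (k \<bullet> xi))^2)) * (xi \<bullet> h)
      + ((x \<bullet> xi + t * (k \<bullet> xi)) / ((funk_s x - (2 * t * (x \<bullet> k) + t^2 * (k \<bullet> k)))
          * sqrt ((funk_s x - (2 * t * (x \<bullet> k) + t^2 * (k \<bullet> k))) * (xi \<bullet> xi) + (x \<bullet> xi + t * (k \<bullet> xi))^2))
        + funk_c / ((funk_s x - (2 * t * (x \<bullet> k) + t^2 * (k \<bullet> k))) * (funk_q x - (2 * t * (x \<bullet> k) + t^2 * (k \<bullet> k)))))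
        * (x \<bullet> h + t * (k \<bullet> h)))"
    by (simp add: fun_eq_iff funk_grad_xi_def funk_root_def funk_s_line funk_q_line inner_add_left inner_scaleR_left)
  have radicand2: "2 * (funk_s x * (xi \<bullet> xi)) + 2 * (x \<bullet> xi)^2 = 2 * funk_root x xi ^ 2"
    using funk_radicand_eq[OF assms] by simp
  show ?thesis unfolding eq
    using d apply (auto intro!: derivative_eq_intros)
    apply (simp only: funk_root_def[symmetric] funk_radicand_eq[OF assms])
    apply (simp add: funk_hess_mixed_def Let_def inner_add_left inner_diff_left inner_scaleR_left)
    apply (simp only: radicand2)
    using d apply (simp add: field_simps inner_commute power2_eq_square power3_eq_cube)
    done
qed

lemma funk_euler:
  assumes "x \<in> klein_disc" "xi \<noteq> 0"
  shows "funk_grad_xi x xi \<bullet> xi = funk_finsler x xi"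
  using funk_domain(1,2,4)[OF assms] funk_radicand_eq[OF assms, symmetric]
  by (simp add: funk_grad_xi_def funk_finsler_eq inner_add_left inner_scaleR_left)
    (simp add: inner_commute field_simps power2_eq_square)

lemma funk_hess_xi_radial:
  assumes "x \<in> klein_disc" "xi \<noteq> 0"
  shows "funk_hess_xi x xi h \<bullet> xi = 0"
proof -
  note d = funk_domain[OF assms]
  define S L A where "S = funk_root x xi" and "L = x \<bullet> xi"
    and "A = funk_s x * (xi \<bullet> h) + L * (x \<bullet> h)"
  have xi_xi: "xi \<bullet> xi = (S^2 - L^2) / funk_s x"
    using funk_radicand_eq[OF assms] d(1) by (simp add: S_def L_def field_simps)
  have "funk_hess_xi x xi h \<bullet> xi
      = (xi \<bullet> h) / S - A / S^3 * (xi \<bullet> xi) + ((x \<bullet> h) / (funk_s x * S) - L * A / (funk_s x * S^3)) * L"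
    unfolding funk_hess_xi_def Let_def S_def L_def A_def
    by (simp add: inner_add_left inner_diff_left inner_scaleR_left) (simp add: inner_commute)
  also have "\<dots> = 0"
    using d(1,4) unfolding xi_xi A_def S_def[symmetric]
    by (simp add: field_simps power2_eq_square power3_eq_cube)
  finally show ?thesis .
qed

lemma funk_hamel:
  assumes "x \<in> klein_disc" "xi \<noteq> 0"
  shows "funk_hess_mixed x xi h \<bullet> xi = funk_grad_x x xi \<bullet> h"
  using funk_domain(1,2,4)[OF assms]
  apply (simp add: funk_hess_mixed_def funk_grad_x_def Let_def inner_add_left inner_diff_left inner_scaleR_left)
  apply (simp add: inner_commute field_simps)
  using funk_radicand_eq[OF assms] by algebra

definition perp :: "real^2 \<Rightarrow> real^2" where
  "perp xi = (\<chi> k. if k = 1 then - xi $ 2 else xi $ 1)"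

lemma funk_hess_xi_axis:
  assumes "x \<in> klein_disc" "xi \<noteq> 0"
  shows "funk_hess_xi x xi (axis i 1) $ j = rK^2 / funk_root x xi ^ 3 * (perp xi $ i * perp xi $ j)"
proof -
  note d = funk_domain[OF assms]
  define S s L where "S = funk_root x xi" and "s = funk_s x" and "L = x $ 1 * xi $ 1 + x $ 2 * xi $ 2"
  have S: "S \<noteq> 0" and s: "s \<noteq> 0"
    using d by (auto simp: S_def s_def)
  have K: "S^2 = s * (xi $ 1 * xi $ 1 + xi $ 2 * xi $ 2) + L^2"
    using funk_radicand_eq[OF assms] by (simp add: S_def s_def L_def inner_real2)
  have "funk_hess_xi x xi (axis i 1) $ j = (if i = j then 1 else 0) / S
      - (s * xi $ i + L * x $ i) / S^3 * xi $ j + (x $ i / (s * S) - L * (s * xi $ i + L * x $ i) / (s * S^3)) * x $ j"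
    by (simp add: funk_hess_xi_def Let_def S_def s_def L_def inner_axis inner_axis' inner_real2[of x xi])
      (simp add: axis_def)
  also have "\<dots> = (S^2 * (s * (if i = j then 1 else 0) + x $ i * x $ j)
      - (s * xi $ i + L * x $ i) * (s * xi $ j + L * x $ j)) / (s * S^3)"
    using S s by (simp add: field_simps power2_eq_square power3_eq_cube)
  also have "\<dots> = s * (s + x \<bullet> x) * (perp xi $ i * perp xi $ j) / (s * S^3)"
  proof -
    have "S^2 * (s * (if i = j then 1 else 0) + x $ i * x $ j)
        - (s * xi $ i + L * x $ i) * (s * xi $ j + L * x $ j) = s * (s + x \<bullet> x) * (perp xi $ i * perp xi $ j)"
      using exhaust_2[of i] exhaust_2[of j] K
      by (auto simp: perp_def inner_real2 L_def power2_eq_square algebra_simps)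
    then show ?thesis by simp
  qed
  also have "\<dots> = rK^2 / funk_root x xi ^ 3 * (perp xi $ i * perp xi $ j)"
    using s by (simp add: S_def s_def funk_s_def)
  finally show ?thesis .
qed

lemma funk_finsler_pos:
  assumes "x \<in> klein_disc" "xi \<noteq> 0"
  shows "0 < funk_finsler x xi"
proof -
  note d = funk_domain[OF assms]
  have "funk_c^2 \<le> (funk_q x)^2"
    using assms(1) funk_c_pos by (intro power_mono) (auto simp: funk_c_def funk_q_def mem_klein_disc_iff)
  then have "(funk_c * (x \<bullet> xi))^2 \<le> (funk_q x * (x \<bullet> xi))^2"
    unfolding power_mult_distrib by (rule mult_right_mono) simp
  also have "\<dots> < (funk_q x * funk_root x xi)^2"
  proof -
    have "0 < (funk_q x)^2 * (funk_s x * (xi \<bullet> xi))"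
      using d(1,2) assms(2) by simp
    then show ?thesis
      unfolding power_mult_distrib funk_radicand_eq[OF assms, symmetric] by (simp add: algebra_simps)
  qed
  finally have "\<bar>funk_c * (x \<bullet> xi)\<bar>^2 < (funk_q x * funk_root x xi)^2"
    by simp
  then have "\<bar>funk_c * (x \<bullet> xi)\<bar> < funk_q x * funk_root x xi"
    by (rule power2_less_imp_less) (use d(2,4) in simp)
  then have "0 < funk_root x xi * funk_q x + funk_c * (x \<bullet> xi)"
    by (simp add: mult.commute)
  then show ?thesis
    using d(1,2) unfolding funk_finsler_eq by (simp add: field_simps)
qed

lemma funk_fund_tensor:
  assumes "x \<in> klein_disc" "xi \<noteq> 0"
  shows "fund_tensor funk_finsler x xi $ i $ j
    = funk_grad_xi x xi $ i * funk_grad_xi x xi $ j + funk_finsler x xi * funk_hess_xi x xi (axis i 1) $ j"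
proof (rule fund_tensor_eq_hessian[where V = "- {0}" and u = "funk_grad_xi x" and H = "funk_hess_xi x xi"])
  show "open (- {0 :: real^2})" "xi \<in> - {0}"
    using assms(2) by auto
qed (use assms in \<open>auto intro: has_derivative_funk_xi has_derivative_funk_grad_xi_xi\<close>)

text \<open>The xi-Hessian of F is a rank one form along the direction perpendicular to xi,
  so det g = F^3 rK^2 / funk_root^3 by Euler's relation.\<close>
lemma funk_fund_tensor_invertible:
  assumes "x \<in> klein_disc" "xi \<noteq> 0"
  shows "invertible (fund_tensor funk_finsler x xi)"
proof -
  define g u F mu where "g = fund_tensor funk_finsler x xi" and "u = funk_grad_xi x xi"
    and "F = funk_finsler x xi" and "mu = rK^2 / funk_root x xi ^ 3"
  have g: "g $ a $ b = u $ a * u $ b + F * (mu * (perp xi $ a * perp xi $ b))" for a b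
    using funk_fund_tensor[OF assms] funk_hess_xi_axis[OF assms] by (simp add: g_def u_def F_def mu_def)
  have "det g = F * mu * (u $ 1 * xi $ 1 + u $ 2 * xi $ 2)^2"
    unfolding det_2 g by (simp add: perp_def algebra_simps power2_eq_square)
  also have "\<dots> = F^3 * mu"
    using funk_euler[OF assms] by (simp add: u_def F_def inner_real2 power2_eq_square power3_eq_cube)
  finally have "det g \<noteq> 0"
    using funk_finsler_pos[OF assms] funk_domain(4)[OF assms] rK_pos by (simp add: F_def mu_def)
  then show ?thesis
    by (simp add: g_def invertible_det_nz)
qed

lemma funk_spray_coeff:
  assumes "x \<in> klein_disc" "xi \<noteq> 0"
  shows "spray_coeff funk_finsler i x xi = (funk_grad_x x xi \<bullet> xi) / (2 * funk_finsler x xi) * xi $ i"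
proof (rule spray_coeff_eq_projective_factor[where u = "funk_grad_xi x xi" and H = "funk_hess_xi x xi"
      and M = "funk_hess_mixed x xi"])
  show "dx k (dxi l (\<lambda>x' xi'. (funk_finsler x' xi')^2)) x xi
      = 2 * (funk_grad_x x xi $ k * funk_grad_xi x xi $ l + funk_finsler x xi * funk_hess_mixed x xi (axis l 1) $ k)"
    for k l
    by (rule dx_dxi_eq_mixed_hessian[where W = klein_disc and u = "\<lambda>x'. funk_grad_xi x' xi"])
      (use assms in \<open>auto simp: klein_disc_eq_ball intro: has_derivative_funk_xi has_derivative_funk_x
        has_derivative_funk_grad_xi_x\<close>)
  show "dx l (\<lambda>x' xi'. (funk_finsler x' xi')^2) x xi = 2 * funk_finsler x xi * funk_grad_x x xi $ l" for l
    using dx_square[where F = funk_finsler, OF has_derivative_funk_x[OF assms]] by (simp add: inner_axis)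
qed (use assms in \<open>auto simp: funk_fund_tensor funk_euler funk_hess_xi_radial funk_hamel
    funk_fund_tensor_invertible dest: funk_finsler_pos\<close>)

lemma funk_spray_coeff_origin:
  assumes "xi \<bullet> xi = 1"
  shows "spray_coeff funk_finsler i 0 xi = funk_c / (2 * rK) * xi $ i"
proof -
  have s: "funk_s 0 = rK^2" "funk_q 0 = 1"
    by (simp_all add: funk_s_def funk_q_def)
  have root: "funk_root 0 xi = rK"
    using rK_pos assms by (simp add: funk_root_def s)
  have grad: "funk_grad_x 0 xi \<bullet> xi = funk_c / rK^2"
    using assms by (simp add: funk_grad_x_def s root inner_add_left)
  have F: "funk_finsler 0 xi = 1 / rK"
    using rK_pos by (simp add: funk_finsler_eq root s power2_eq_square)
  have "0 \<in> klein_disc" "xi \<noteq> 0"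
    using rK_pos assms by (auto simp: klein_disc_def)
  then have "spray_coeff funk_finsler i 0 xi = (funk_grad_x 0 xi \<bullet> xi) / (2 * funk_finsler 0 xi) * xi $ i"
    by (rule funk_spray_coeff)
  then show ?thesis
    unfolding grad F using rK_pos by (simp add: field_simps power2_eq_square)
qed

theorem corollary4p1:
  shows "is_douglas_on klein_disc funk_finsler \<and> \<not> is_berwald_on klein_disc funk_finsler"
proof
  show "is_douglas_on klein_disc funk_finsler"
    by (rule is_douglas_on_if_projective) (rule funk_spray_coeff)
  show "\<not> is_berwald_on klein_disc funk_finsler"
  proof
    assume "is_berwald_on klein_disc funk_finsler"
    moreover have "0 \<in> klein_disc"
      using rK_pos by (simp add: klein_disc_def)
    moreover have "axis 1 1 \<noteq> (0 :: real^2)"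
      by (simp add: axis_eq_0_iff)
    ultimately have "spray_coeff funk_finsler 1 0 (- axis 1 1) = spray_coeff funk_finsler 1 0 (axis 1 1)"
      by (rule is_berwald_on_spray_coeff_even)
    then have "- (funk_c / (2 * rK)) = funk_c / (2 * rK)"
      by (simp add: funk_spray_coeff_origin inner_axis_axis)
    then show False
      using funk_c_pos rK_pos by simp
  qed
qed

end
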